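(* There is an absolute constant $c>0$ such that for every auction representation language $L$, every $m\ge1$, and every $H$ with $1<H<2^{m/400}$, there exists a distribution $\mathcal{D}$ over valuations in $[1,H]^m$ such that every auction of $L$-complexity at most $2^{m/400}$ has revenue on $\mathcal{D}$ at most $\frac{c}{\log H}\,\mathrm{OPT}(\mathcal{D})$.
   Context: Setting: a single unit-demand bidder and $m$ items. A valuation is a vector $v=(v(1),\dots,v(m))$. An auction (menu) is a set of entries $(x,p)$ with $x_j\ge0$, $\sum_j x_j\le1$ ($x_j$ the probability of receiving item $j$) and price $p\ge0$; the entry $(0,0)$ is always available. A bidder with valuation $v$ selects an entry maximizing $\sum_j x_jv(j)-p$ (ties broken in favor of the higher price) and pays its price. The revenue of an auction on $\mathcal{D}$ is the expected payment for $v\sim\mathcal{D}$. $\mathrm{OPT}(\mathcal{D})$ is the supremum of revenue on $\mathcal{D}$ over all auctions. An auction representation language is an arbitrary function $L$ from finite binary strings to auctions; the $L$-complexity of an auction is the length of the shortest binary string that $L$ maps to it (infinite if none). *)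

theory Defs
  imports "HOL-Probability.Probability" "HOL-Library.Extended_Nat"
begin

text \<open>Items are indexed by 0..m-1. A valuation is a function nat => real that is
  zero outside {0..<m}. A menu entry is a pair (x, p) with x an allocation vector
  (zero outside {0..<m}) and p a price.\<close>

type_synonym valuation = "nat \<Rightarrow> real"
type_synonym entry = "(nat \<Rightarrow> real) \<times> real"
type_synonym menu = "entry set"

definition valid_entry :: "nat \<Rightarrow> entry \<Rightarrow> bool" where
  "valid_entry m e \<longleftrightarrow> (\<forall>j. 0 \<le> fst e j) \<and> (\<forall>j\<ge>m. fst e j = 0)
     \<and> (\<Sum>j<m. fst e j) \<le> 1 \<and> 0 \<le> snd e"

definition null_entry :: entry where
  "null_entry = ((\<lambda>_. 0), 0)"

definition utility :: "nat \<Rightarrow> valuation \<Rightarrow> entry \<Rightarrow> real" where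
  "utility m v e = (\<Sum>j<m. fst e j * v j) - snd e"

definition vals_box :: "nat \<Rightarrow> real \<Rightarrow> valuation set" where
  "vals_box m H = {v. (\<forall>j<m. 1 \<le> v j \<and> v j \<le> H) \<and> (\<forall>j\<ge>m. v j = 0)}"

definition all_vals :: "nat \<Rightarrow> valuation set" where
  "all_vals m = {v. (\<forall>j. 0 \<le> v j) \<and> (\<forall>j\<ge>m. v j = 0)}"

definition is_choice :: "nat \<Rightarrow> menu \<Rightarrow> valuation \<Rightarrow> entry \<Rightarrow> bool" where
  "is_choice m M v e \<longleftrightarrow> e \<in> M \<and> (\<forall>e'\<in>M. utility m v e' \<le> utility m v e)
     \<and> (\<forall>e'\<in>M. utility m v e' = utility m v e \<longrightarrow> snd e' \<le> snd e)"

definition is_auction :: "nat \<Rightarrow> menu \<Rightarrow> bool" where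
  "is_auction m M \<longleftrightarrow> (\<forall>e\<in>M. valid_entry m e) \<and> null_entry \<in> M
     \<and> (\<forall>v\<in>all_vals m. \<exists>e. is_choice m M v e)"

definition payment :: "nat \<Rightarrow> menu \<Rightarrow> valuation \<Rightarrow> real" where
  "payment m M v = (THE p. \<exists>e. is_choice m M v e \<and> snd e = p)"

definition revenue :: "nat \<Rightarrow> menu \<Rightarrow> valuation pmf \<Rightarrow> real" where
  "revenue m M D = measure_pmf.expectation D (\<lambda>v. payment m M v)"

definition OPT :: "nat \<Rightarrow> valuation pmf \<Rightarrow> real" where
  "OPT m D = (SUP M \<in> {M. is_auction m M}. revenue m M D)"

text \<open>L-complexity: length of the shortest binary string mapped to A (infinite if none).\<close>
definition L_complexity :: "(bool list \<Rightarrow> 'a) \<Rightarrow> 'a \<Rightarrow> enat" where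
  "L_complexity L A = (INF s \<in> {s. L s = A}. enat (length s))"

end

theory Submission
  imports Defs
begin

text \<open>Take a code \<open>F\<close> of \<open>2\<^bsup>\<Omega>(m)\<^esup>\<close> words whose supports, sets of \<open>m/16\<close>
  items, pairwise share at most half of their items, and for \<open>f \<in> F\<close> let the bidder value
  the items of \<open>f\<close> at \<open>2\<^bsup>i\<^esup>\<close> and all others at \<open>1\<close>. Against this single-parameter
  family every auction extracts, summed over the levels \<open>i \<le> n \<approx> log H\<close> and normalised by
  the value, revenue at most \<open>3\<close>. Hence for a uniformly random assignment of a level
  \<open>l f\<close> to each code word, a fixed auction earns only \<open>O(|F|/n)\<close> normalised revenue except
  with probability \<open>exp(-|F|/n)\<close>, and a union bound over the at most \<open>2\<^bsup>N+1\<^esup>\<close> auctions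
  of complexity \<open>N\<close> yields one assignment that is bad for all of them. On the distribution
  that puts weight \<open>\<propto> 2\<^bsup>-l f\<^esup>\<close> on the valuation of \<open>f\<close> at level \<open>l f\<close>, the menu offering
  for each \<open>f\<close> the uniform lottery over its items at price \<open>2\<^bsup>l f\<^esup>/4\<close> extracts \<open>1/4\<close>
  from every code word, i.e. a factor \<open>\<Omega>(n) = \<Omega>(log H)\<close> more.\<close>

lemma is_choice_utility_eq:
  assumes "is_choice m M v e1" "is_choice m M v e2"
  shows "utility m v e1 = utility m v e2"
  using assms unfolding is_choice_def by (meson order_antisym)

lemma is_choice_price_eq:
  assumes "is_choice m M v e1" "is_choice m M v e2"
  shows "snd e1 = snd e2"
  using assms is_choice_utility_eq[OF assms] unfolding is_choice_def by (metis order_antisym)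

lemma payment_eq_choice: "is_choice m M v e \<Longrightarrow> payment m M v = snd e"
  unfolding payment_def by (rule the_equality) (blast, metis is_choice_price_eq)

definition bidder_utility :: "nat \<Rightarrow> menu \<Rightarrow> valuation \<Rightarrow> real" where
  "bidder_utility m M v = (THE u. \<exists>e. is_choice m M v e \<and> utility m v e = u)"

lemma bidder_utility_eq_choice: "is_choice m M v e \<Longrightarrow> bidder_utility m M v = utility m v e"
  unfolding bidder_utility_def by (rule the_equality) (blast, metis is_choice_utility_eq)

lemma utility_null_entry [simp]: "utility m v null_entry = 0"
  unfolding utility_def null_entry_def by simp

lemma ex_is_choice_finite:
  assumes "finite M" "M \<noteq> {}"
  shows "\<exists>e. is_choice m M v e"
proof -
  define um where "um = Max (utility m v ` M)"
  define M1 where "M1 = {e\<in>M. utility m v e = um}"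
  have "um \<in> utility m v ` M" unfolding um_def using assms by (intro Max_in) auto
  then have ne: "M1 \<noteq> {}" unfolding M1_def by auto
  have fin: "finite M1" unfolding M1_def using assms by auto
  have "Max (snd ` M1) \<in> snd ` M1" using ne fin by (intro Max_in) auto
  then obtain e where e: "e \<in> M1" "snd e = Max (snd ` M1)" by auto
  have "is_choice m M v e"
    unfolding is_choice_def
  proof (intro conjI ballI impI)
    show "e \<in> M" using e unfolding M1_def by auto
    fix e' assume "e' \<in> M"
    then show "utility m v e' \<le> utility m v e" using e assms unfolding M1_def um_def by auto
    assume "utility m v e' = utility m v e"
    with \<open>e' \<in> M\<close> e fin show "snd e' \<le> snd e" unfolding M1_def by auto
  qed
  then show ?thesis by blast
qed

lemma finite_menu_is_auction:
  assumes "finite M" "null_entry \<in> M" "\<And>e. e \<in> M \<Longrightarrow> valid_entry m e"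
  shows "is_auction m M"
  using assms ex_is_choice_finite[of M] unfolding is_auction_def by blast

lemma vals_box_subset_all_vals: "vals_box m H \<subseteq> all_vals m"
proof
  fix v assume v: "v \<in> vals_box m H"
  have "0 \<le> v j" for j
  proof (cases "j < m")
    case True
    then have "1 \<le> v j" using v unfolding vals_box_def by blast
    then show ?thesis by linarith
  qed (use v in \<open>simp add: vals_box_def\<close>)
  then show "v \<in> all_vals m" using v unfolding vals_box_def all_vals_def by simp
qed

lemma obtain_choice:
  assumes "is_auction m A" "v \<in> all_vals m"
  obtains e where "is_choice m A v e" "e \<in> A" "valid_entry m e"
proof -
  obtain e where e: "is_choice m A v e" using assms unfolding is_auction_def by blast
  then have "e \<in> A" by (simp add: is_choice_def)
  with e assms(1) that show thesis unfolding is_auction_def by blast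
qed

lemma utility_le_bidder_utility:
  assumes "is_auction m A" "v \<in> all_vals m" "e \<in> A"
  shows "utility m v e \<le> bidder_utility m A v"
proof -
  obtain e' where "is_choice m A v e'" using obtain_choice[OF assms(1,2)] .
  then show ?thesis using assms(3) unfolding bidder_utility_eq_choice[OF \<open>is_choice m A v e'\<close>]
    by (simp add: is_choice_def)
qed

lemma bidder_utility_nonneg: "is_auction m A \<Longrightarrow> v \<in> all_vals m \<Longrightarrow> 0 \<le> bidder_utility m A v"
  using utility_le_bidder_utility[of m A v null_entry] unfolding is_auction_def by simp

lemma value_of_entry_le:
  assumes "valid_entry m e" "v \<in> vals_box m H" "0 \<le> H"
  shows "(\<Sum>j<m. fst e j * v j) \<le> H"
proof -
  have "(\<Sum>j<m. fst e j * v j) \<le> (\<Sum>j<m. fst e j) * H"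
    using assms unfolding valid_entry_def vals_box_def
    by (auto simp: sum_distrib_right intro!: sum_mono mult_left_mono)
  also have "\<dots> \<le> H" using assms unfolding valid_entry_def by (simp add: mult_left_le_one_le sum_nonneg)
  finally show ?thesis .
qed

lemma
  assumes A: "is_auction m A" and v: "v \<in> vals_box m H" and H: "0 \<le> H"
  shows payment_nonneg: "0 \<le> payment m A v"
    and payment_le: "payment m A v \<le> H"
    and bidder_utility_le: "bidder_utility m A v \<le> H"
proof -
  have va: "v \<in> all_vals m" using v vals_box_subset_all_vals by blast
  obtain e where e: "is_choice m A v e" "valid_entry m e" using obtain_choice[OF A va] by blast
  have "0 \<le> utility m v e"
    using bidder_utility_nonneg[OF A va] unfolding bidder_utility_eq_choice[OF e(1)] .
  moreover have "0 \<le> snd e" using e(2) unfolding valid_entry_def by simp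
  ultimately show "0 \<le> payment m A v" "payment m A v \<le> H" "bidder_utility m A v \<le> H"
    using value_of_entry_le[OF e(2) v H]
    unfolding payment_eq_choice[OF e(1)] bidder_utility_eq_choice[OF e(1)] utility_def by linarith+
qed

lemma revenue_finite_support:
  "finite (set_pmf D) \<Longrightarrow> revenue m A D = (\<Sum>v\<in>set_pmf D. pmf D v * payment m A v)"
  unfolding revenue_def by (subst integral_measure_pmf) auto

lemma
  assumes A: "is_auction m A" and D: "finite (set_pmf D)" "set_pmf D \<subseteq> vals_box m H"
    and H: "0 \<le> H"
  shows revenue_nonneg: "0 \<le> revenue m A D"
    and revenue_le: "revenue m A D \<le> H"
proof -
  have "payment m A v \<in> {0..H}" if "v \<in> set_pmf D" for v
    using payment_nonneg[OF A _ H] payment_le[OF A _ H] that D(2) by auto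
  then have "0 \<le> revenue m A D \<and> revenue m A D \<le> (\<Sum>v\<in>set_pmf D. pmf D v * H)"
    unfolding revenue_finite_support[OF D(1)]
    by (auto intro!: sum_nonneg sum_mono mult_left_mono)
  moreover have "(\<Sum>v\<in>set_pmf D. pmf D v * H) = H"
    using sum_pmf_eq_1[OF D(1) order.refl] by (simp flip: sum_distrib_right)
  ultimately show "0 \<le> revenue m A D" "revenue m A D \<le> H" by auto
qed

lemma
  assumes A: "is_auction m A" and D: "finite (set_pmf D)" "set_pmf D \<subseteq> vals_box m H"
    and H: "0 \<le> H"
  shows revenue_le_OPT: "revenue m A D \<le> OPT m D"
    and OPT_nonneg: "0 \<le> OPT m D"
proof -
  have "bdd_above ((\<lambda>M. revenue m M D) ` {M. is_auction m M})"
    using revenue_le[OF _ D H] by (auto intro!: bdd_aboveI)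
  then show "revenue m A D \<le> OPT m D" unfolding OPT_def using A by (intro cSUP_upper) auto
  then show "0 \<le> OPT m D" using revenue_nonneg[OF A D H] by linarith
qed

section \<open>Revenue from a single-parameter family\<close>

definition raised_val :: "nat \<Rightarrow> nat set \<Rightarrow> real \<Rightarrow> valuation" where
  "raised_val m T w = (\<lambda>j. if j < m then (if j \<in> T then w else 1) else 0)"

lemma raised_val_in_vals_box: "1 \<le> w \<Longrightarrow> w \<le> H \<Longrightarrow> raised_val m T w \<in> vals_box m H"
  unfolding raised_val_def vals_box_def by auto

lemma raised_val_in_all_vals: "0 \<le> w \<Longrightarrow> raised_val m T w \<in> all_vals m"
  unfolding raised_val_def all_vals_def by auto

lemma utility_raised_val:
  assumes "T \<subseteq> {..<m}"
  shows "utility m (raised_val m T w) e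
           = (w - 1) * (\<Sum>j\<in>T. fst e j) + (\<Sum>j<m. fst e j) - snd e"
proof -
  have "(\<Sum>j<m. fst e j * raised_val m T w j)
      = (\<Sum>j<m. fst e j + (w - 1) * (if j \<in> T then fst e j else 0))"
    unfolding raised_val_def by (intro sum.cong) (auto simp: algebra_simps)
  also have "\<dots> = (\<Sum>j<m. fst e j) + (w - 1) * (\<Sum>j\<in>{..<m} \<inter> T. fst e j)"
    by (simp add: sum.distrib sum_distrib_left sum.inter_restrict)
  also have "{..<m} \<inter> T = T" using assms by auto
  finally show ?thesis unfolding utility_def by simp
qed

text \<open>Doubling the value on \<open>T\<close> gains the bidder at least \<open>w\<close> times the probability
  \<open>a\<close> of receiving an item of \<open>T\<close>, while her utility at \<open>w\<close> is
  \<open>(w - 1) a + t - p\<close> with \<open>t \<le> 1\<close>; eliminating \<open>a\<close> bounds the price.\<close>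
lemma payment_le_utility_increment:
  assumes A: "is_auction m A" and T: "T \<subseteq> {..<m}" and w: "0 \<le> w"
  shows "payment m A (raised_val m T w)
           \<le> bidder_utility m A (raised_val m T (2 * w))
             - 2 * bidder_utility m A (raised_val m T w) + 1"
proof -
  obtain e where e: "is_choice m A (raised_val m T w) e" "e \<in> A" "valid_entry m e"
    using obtain_choice[OF A raised_val_in_all_vals[OF w]] .
  define a where "a = (\<Sum>j\<in>T. fst e j)"
  define t where "t = (\<Sum>j<m. fst e j)"
  have "0 \<le> a" "t \<le> 1"
    using e(3) unfolding valid_entry_def a_def t_def by (auto intro: sum_nonneg)
  moreover have "bidder_utility m A (raised_val m T w) = (w - 1) * a + t - snd e"
    unfolding bidder_utility_eq_choice[OF e(1)] utility_raised_val[OF T] a_def t_def ..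
  moreover have "utility m (raised_val m T (2 * w)) e \<le> bidder_utility m A (raised_val m T (2 * w))"
    using w by (intro utility_le_bidder_utility[OF A raised_val_in_all_vals e(2)]) simp
  then have "(2 * w - 1) * a + t - snd e \<le> bidder_utility m A (raised_val m T (2 * w))"
    unfolding utility_raised_val[OF T] a_def t_def .
  ultimately show ?thesis unfolding payment_eq_choice[OF e(1)] by (simp add: algebra_simps)
qed

lemma sum_le_3_of_utility_increments:
  fixes p u :: "nat \<Rightarrow> real"
  assumes u0: "\<And>i. 0 \<le> u i" and u_le: "\<And>i. u i \<le> 2 ^ i"
    and p_le: "\<And>i. p i \<le> u (Suc i) - 2 * u i + 1"
  shows "(\<Sum>i\<in>{1..n}. p i / 2 ^ i) \<le> 3"
proof -
  have step: "p i / 2 ^ i \<le> 2 * (u (Suc i) / 2 ^ Suc i) - 2 * (u i / 2 ^ i) + (1 / 2) ^ i" for i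
  proof -
    have "p i / 2 ^ i \<le> (u (Suc i) - 2 * u i + 1) / 2 ^ i"
      using p_le[of i] by (simp add: divide_right_mono)
    then show ?thesis by (simp add: field_simps power_one_over)
  qed
  have telescope: "(\<Sum>i\<in>{1..n}. p i / 2 ^ i) \<le> 2 * (u (Suc n) / 2 ^ Suc n) + 1 - (1 / 2) ^ n" for n
  proof (induction n)
    case 0
    then show ?case using u0[of 1] by simp
  next
    case (Suc n)
    then show ?case using step[of "Suc n"] by simp
  qed
  have "u (Suc n) / 2 ^ Suc n \<le> 1" using u_le[of "Suc n"] by simp
  moreover have "(0::real) \<le> (1 / 2) ^ n" by simp
  ultimately show ?thesis using telescope[of n] by linarith
qed

lemma sum_payment_raised_val_le:
  assumes A: "is_auction m A" and T: "T \<subseteq> {..<m}"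
  shows "(\<Sum>i\<in>{1..n}. payment m A (raised_val m T (2 ^ i)) / 2 ^ i) \<le> 3"
proof (rule sum_le_3_of_utility_increments)
  fix i
  have "raised_val m T (2 ^ i) \<in> vals_box m (2 ^ i)" by (rule raised_val_in_vals_box) auto
  then show "0 \<le> bidder_utility m A (raised_val m T (2 ^ i))"
    and "bidder_utility m A (raised_val m T (2 ^ i)) \<le> 2 ^ i"
    using bidder_utility_nonneg[OF A] vals_box_subset_all_vals bidder_utility_le[OF A] by auto
  show "payment m A (raised_val m T (2 ^ i))
          \<le> bidder_utility m A (raised_val m T (2 ^ Suc i))
            - 2 * bidder_utility m A (raised_val m T (2 ^ i)) + 1"
    using payment_le_utility_increment[OF A T, of "2 ^ i"] by simp
qed

section \<open>Codes of large distance\<close>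

definition code_words :: "nat \<Rightarrow> (nat \<Rightarrow> nat) set" where
  "code_words b = PiE {..<b} (\<lambda>_. {..<16})"

definition agreement :: "nat \<Rightarrow> (nat \<Rightarrow> nat) \<Rightarrow> (nat \<Rightarrow> nat) \<Rightarrow> nat" where
  "agreement b f g = card {x\<in>{..<b}. f x = g x}"

text \<open>The items are split into blocks of 16; the word \<open>f\<close> selects item \<open>f x\<close> of block \<open>x\<close>.\<close>
definition word_support :: "nat \<Rightarrow> (nat \<Rightarrow> nat) \<Rightarrow> nat set" where
  "word_support b f = (\<lambda>x. x * 16 + f x) ` {..<b}"

lemma finite_code_words: "finite (code_words b)"
  unfolding code_words_def by (simp add: finite_PiE)

lemma card_code_words: "card (code_words b) = 16 ^ b"
  unfolding code_words_def by (simp add: card_PiE)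

lemma code_words_less: "f \<in> code_words b \<Longrightarrow> x < b \<Longrightarrow> f x < 16"
  unfolding code_words_def by (auto simp: PiE_iff)

lemma agreement_self: "agreement b f f = b"
  unfolding agreement_def by simp

lemma agreement_commute: "agreement b f g = agreement b g f"
  unfolding agreement_def by (rule arg_cong[where f = card]) auto

lemma block_encoding_eq:
  fixes x y a c :: nat
  assumes "x * 16 + a = y * 16 + c" "a < 16" "c < 16"
  shows "x = y \<and> a = c"
proof -
  have "x = (x * 16 + a) div 16" "y = (y * 16 + c) div 16" using assms by auto
  then show ?thesis using assms(1) by simp
qed

lemma finite_word_support: "finite (word_support b f)"
  unfolding word_support_def by simp

lemma word_support_subset:
  assumes "16 * b \<le> m" "f \<in> code_words b"
  shows "word_support b f \<subseteq> {..<m}"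
proof
  fix j assume "j \<in> word_support b f"
  then obtain x where "x < b" "j = x * 16 + f x" unfolding word_support_def by blast
  with assms code_words_less[OF assms(2)] show "j \<in> {..<m}" by fastforce
qed

lemma card_word_support_inter:
  assumes f: "f \<in> code_words b" and g: "g \<in> code_words b"
  shows "card (word_support b f \<inter> word_support b g) = agreement b f g"
proof -
  let ?E = "{x\<in>{..<b}. f x = g x}"
  have "word_support b f \<inter> word_support b g \<subseteq> (\<lambda>x. x * 16 + f x) ` ?E"
  proof
    fix j assume "j \<in> word_support b f \<inter> word_support b g"
    then obtain x y where xy: "x < b" "y < b" "j = x * 16 + f x" "j = y * 16 + g y"
      unfolding word_support_def by blast
    then have "x * 16 + f x = y * 16 + g y" by simp
    then have "x = y \<and> f x = g y"
      by (rule block_encoding_eq[OF _ code_words_less[OF f xy(1)] code_words_less[OF g xy(2)]])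
    then show "j \<in> (\<lambda>x. x * 16 + f x) ` ?E" using xy by (intro image_eqI[where x = x]) auto
  qed
  moreover have "(\<lambda>x. x * 16 + f x) ` ?E \<subseteq> word_support b f \<inter> word_support b g"
  proof
    fix j assume "j \<in> (\<lambda>x. x * 16 + f x) ` ?E"
    then obtain x where x: "x < b" "f x = g x" "j = x * 16 + f x" by blast
    then have "j = x * 16 + g x" by simp
    with x show "j \<in> word_support b f \<inter> word_support b g"
      unfolding word_support_def by blast
  qed
  ultimately have eq: "word_support b f \<inter> word_support b g = (\<lambda>x. x * 16 + f x) ` ?E" ..
  have "inj_on (\<lambda>x. x * 16 + f x) ?E"
  proof (rule inj_onI)
    fix x y assume "x \<in> ?E" "y \<in> ?E" "x * 16 + f x = y * 16 + f y"
    then show "x = y" using block_encoding_eq code_words_less[OF f] by blast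
  qed
  then show ?thesis unfolding agreement_def eq by (rule card_image)
qed

lemma card_word_support: "f \<in> code_words b \<Longrightarrow> card (word_support b f) = b"
  using card_word_support_inter[of f b f] by (simp add: agreement_self)

lemma card_words_agreeing_on:
  assumes f: "f \<in> code_words b" and B: "B \<subseteq> {..<b}"
  shows "card {g\<in>code_words b. \<forall>x\<in>B. g x = f x} = 16 ^ (b - card B)"
proof -
  have "{g\<in>code_words b. \<forall>x\<in>B. g x = f x} = PiE {..<b} (\<lambda>x. if x \<in> B then {f x} else {..<16})"
    using f B unfolding code_words_def by (auto simp: PiE_iff extensional_def split: if_splits)
  moreover have "card (PiE {..<b} (\<lambda>x. if x \<in> B then {f x} else {..<16::nat}))
      = (\<Prod>x\<in>{..<b}. if x \<in> B then 1 else 16)"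
    by (simp add: card_PiE if_distrib cong: if_cong)
  moreover have "\<dots> = (\<Prod>x\<in>{..<b} - B. 16)"
    by (subst prod.If_cases) (auto simp: Diff_eq)
  ultimately show ?thesis using B by (simp add: card_Diff_subset finite_subset)
qed

lemma card_words_close_le:
  assumes f: "f \<in> code_words b" and k: "k \<le> b"
  shows "card {g\<in>code_words b. k \<le> agreement b f g} \<le> 2 ^ b * 16 ^ (b - k)"
proof -
  define Bs where "Bs = {B. B \<subseteq> {..<b} \<and> card B = k}"
  have finBs: "finite Bs" unfolding Bs_def by (rule finite_subset[of _ "Pow {..<b}"]) auto
  have "{g\<in>code_words b. k \<le> agreement b f g} \<subseteq> (\<Union>B\<in>Bs. {g\<in>code_words b. \<forall>x\<in>B. g x = f x})"
  proof
    fix g assume g: "g \<in> {g\<in>code_words b. k \<le> agreement b f g}"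
    then obtain B where B: "B \<subseteq> {x\<in>{..<b}. f x = g x}" "card B = k"
      unfolding agreement_def by (auto elim: obtain_subset_with_card_n)
    then have "B \<in> Bs" "\<forall>x\<in>B. g x = f x" unfolding Bs_def by auto
    then show "g \<in> (\<Union>B\<in>Bs. {g\<in>code_words b. \<forall>x\<in>B. g x = f x})" using g by blast
  qed
  then have "card {g\<in>code_words b. k \<le> agreement b f g}
      \<le> card (\<Union>B\<in>Bs. {g\<in>code_words b. \<forall>x\<in>B. g x = f x})"
    by (intro card_mono) (auto simp: finBs finite_code_words)
  also have "\<dots> \<le> (\<Sum>B\<in>Bs. card {g\<in>code_words b. \<forall>x\<in>B. g x = f x})"
    by (rule card_UN_le[OF finBs])
  also have "\<dots> = card Bs * 16 ^ (b - k)"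
    using card_words_agreeing_on[OF f] by (simp add: Bs_def)
  also have "card Bs \<le> 2 ^ b"
    using card_mono[of "Pow {..<b}" Bs] by (auto simp: Bs_def card_Pow)
  then have "card Bs * 16 ^ (b - k) \<le> 2 ^ b * 16 ^ (b - k)" by simp
  finally show ?thesis .
qed

lemma card_covering_code_ge:
  assumes b: "1 \<le> b" and FU: "F \<subseteq> code_words b" and finF: "finite F"
    and cover: "code_words b \<subseteq> (\<Union>f\<in>F. {g\<in>code_words b. b div 2 + 1 \<le> agreement b f g})"
  shows "2 ^ b \<le> card F"
proof -
  define k where "k = b div 2 + 1"
  have kb: "k \<le> b" using b unfolding k_def by simp
  have "16 ^ b \<le> card (\<Union>f\<in>F. {g\<in>code_words b. k \<le> agreement b f g})"
    unfolding card_code_words[symmetric] k_def using cover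
    by (intro card_mono) (auto simp: finF finite_code_words)
  also have "\<dots> \<le> (\<Sum>f\<in>F. card {g\<in>code_words b. k \<le> agreement b f g})"
    by (rule card_UN_le[OF finF])
  also have "\<dots> \<le> (\<Sum>f\<in>F. 2 ^ b * 16 ^ (b - k))"
    using card_words_close_le[OF _ kb] FU by (intro sum_mono) auto
  also have "\<dots> = (card F * 2 ^ b) * 16 ^ (b - k)" by simp
  also have "(16::nat) ^ b = 16 ^ k * 16 ^ (b - k)" using kb by (simp flip: power_add)
  finally have "16 ^ k \<le> card F * 2 ^ b" by (rule mult_right_le_imp_le) simp
  moreover have "(2::nat) ^ b * 2 ^ b \<le> 16 ^ k"
  proof -
    have "(2::nat) ^ b * 2 ^ b = 2 ^ (b + b)" by (simp flip: power_add)
    also have "\<dots> \<le> 2 ^ (4 * k)" unfolding k_def by (intro power_increasing) auto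
    also have "\<dots> = 16 ^ k" by (simp add: power_mult)
    finally show ?thesis .
  qed
  ultimately have "2 ^ b * 2 ^ b \<le> card F * 2 ^ b" by (rule order_trans[rotated])
  then show "2 ^ b \<le> card F" by (rule mult_right_le_imp_le) simp
qed

text \<open>Gilbert--Varshamov: a maximal code of agreement at most \<open>b/2\<close> is covering.\<close>
lemma exists_large_code:
  assumes b: "1 \<le> b"
  shows "\<exists>F \<subseteq> code_words b. 2 ^ b \<le> card F
           \<and> (\<forall>f\<in>F. \<forall>g\<in>F. f \<noteq> g \<longrightarrow> 2 * agreement b f g \<le> b)"
proof -
  define is_code where "is_code F \<longleftrightarrow> F \<subseteq> code_words b
    \<and> (\<forall>f\<in>F. \<forall>g\<in>F. f \<noteq> g \<longrightarrow> 2 * agreement b f g \<le> b)" for F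
  have "is_code {}" by (simp add: is_code_def)
  moreover have "\<forall>G. is_code G \<longrightarrow> card G < card (code_words b) + 1"
    unfolding is_code_def using card_mono[OF finite_code_words] by (simp add: less_Suc_eq_le)
  ultimately obtain F where F: "is_code F" and maximal: "\<And>G. is_code G \<Longrightarrow> card G \<le> card F"
    using ex_has_greatest_nat[of is_code "{}" card] by blast
  have FU: "F \<subseteq> code_words b" using F unfolding is_code_def by blast
  then have finF: "finite F" using finite_subset finite_code_words by blast
  have "code_words b \<subseteq> (\<Union>f\<in>F. {g\<in>code_words b. b div 2 + 1 \<le> agreement b f g})"
  proof
    fix g assume g: "g \<in> code_words b"
    show "g \<in> (\<Union>f\<in>F. {g\<in>code_words b. b div 2 + 1 \<le> agreement b f g})"
    proof (rule ccontr)
      assume far: "\<not> ?thesis"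
      have "g \<notin> F"
      proof
        assume "g \<in> F"
        moreover have "b div 2 + 1 \<le> agreement b g g" using b by (simp add: agreement_self)
        ultimately show False using far g by blast
      qed
      moreover have "\<forall>f\<in>F. 2 * agreement b f g \<le> b" using far g by auto
      then have "is_code (insert g F)"
        using F g unfolding is_code_def by (auto simp: agreement_commute)
      ultimately show False using maximal[of "insert g F"] finF by simp
    qed
  qed
  then have "2 ^ b \<le> card F" by (rule card_covering_code_ge[OF b FU finF])
  with F show ?thesis unfolding is_code_def by (intro exI[of _ F]) simp
qed

section \<open>Choosing the levels\<close>

lemma exp_le_1_plus_2x: "0 \<le> (x::real) \<Longrightarrow> x \<le> 1 \<Longrightarrow> exp x \<le> 1 + 2 * x"
  using exp_bound[of x] mult_left_le[of x x] by (simp add: power2_eq_square)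

text \<open>Exponential moment method: summing \<open>exp (\<Sum>\<^sub>f Y f (l f) - t)\<close> over all level
  assignments \<open>l\<close> factorises into a product over \<open>f\<close>.\<close>
lemma card_PiE_sum_large_le:
  fixes F :: "'a set" and I :: "nat set" and Y :: "'a \<Rightarrow> nat \<Rightarrow> real"
  assumes finF: "finite F" and finI: "finite I" and n: "card I = n" "0 < n"
    and Y01: "\<And>f i. f \<in> F \<Longrightarrow> i \<in> I \<Longrightarrow> 0 \<le> Y f i \<and> Y f i \<le> 1"
    and Ysum: "\<And>f. f \<in> F \<Longrightarrow> (\<Sum>i\<in>I. Y f i) \<le> 3"
  shows "real (card {l\<in>PiE F (\<lambda>_. I). 7 * real (card F) / n < (\<Sum>f\<in>F. Y f (l f))})
           \<le> real n ^ card F * exp (- real (card F) / n)"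
proof -
  define K where "K = card F"
  define t where "t = 7 * real K / n"
  define P where "P = PiE F (\<lambda>_. I)"
  define Bad where "Bad = {l\<in>P. t < (\<Sum>f\<in>F. Y f (l f))}"
  have finP: "finite P" unfolding P_def using finF finI by (simp add: finite_PiE)
  have "real (card Bad) = (\<Sum>l\<in>Bad. 1)" by simp
  also have "\<dots> \<le> (\<Sum>l\<in>Bad. exp ((\<Sum>f\<in>F. Y f (l f)) - t))"
    by (intro sum_mono) (simp add: Bad_def)
  also have "\<dots> \<le> (\<Sum>l\<in>P. exp ((\<Sum>f\<in>F. Y f (l f)) - t))"
    by (rule sum_mono2[OF finP]) (auto simp: Bad_def)
  also have "\<dots> = exp (- t) * (\<Sum>l\<in>P. \<Prod>f\<in>F. exp (Y f (l f)))"
    by (simp add: exp_diff exp_sum[OF finF] exp_minus sum_distrib_left field_simps)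
  also have "(\<Sum>l\<in>P. \<Prod>f\<in>F. exp (Y f (l f))) = (\<Prod>f\<in>F. \<Sum>i\<in>I. exp (Y f i))"
    unfolding P_def by (rule prod_sum_PiE[symmetric]) (use finF finI in auto)
  also have "\<dots> \<le> (\<Prod>f\<in>F. real n * exp (6 / n))"
  proof (rule prod_mono)
    fix f assume f: "f \<in> F"
    have "(\<Sum>i\<in>I. exp (Y f i)) \<le> (\<Sum>i\<in>I. 1 + 2 * Y f i)"
      by (rule sum_mono) (use Y01[OF f] exp_le_1_plus_2x in auto)
    also have "\<dots> = real n + 2 * (\<Sum>i\<in>I. Y f i)" using n by (simp add: sum.distrib sum_distrib_left)
    also have "\<dots> \<le> real n * (1 + 6 / n)" using Ysum[OF f] n by (simp add: field_simps)
    also have "\<dots> \<le> real n * exp (6 / n)" by (intro mult_left_mono) auto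
    finally show "0 \<le> (\<Sum>i\<in>I. exp (Y f i)) \<and> (\<Sum>i\<in>I. exp (Y f i)) \<le> real n * exp (6 / n)"
      by (simp add: sum_nonneg)
  qed
  also have "(\<Prod>f\<in>F. real n * exp (6 / n)) = real n ^ K * exp (real K * (6 / n))"
    by (simp add: K_def power_mult_distrib flip: exp_of_nat_mult)
  finally have "real (card Bad) \<le> real n ^ K * (exp (- t) * exp (real K * (6 / n)))"
    by (simp add: mult_left_mono ac_simps)
  also have "exp (- t) * exp (real K * (6 / n)) = exp (- real K / n)"
    unfolding t_def by (simp add: exp_add[symmetric] field_simps)
  finally show ?thesis unfolding Bad_def P_def t_def K_def .
qed

lemma exists_levels_sum_le:
  fixes S :: "'b set" and F :: "'a set" and Y :: "'b \<Rightarrow> 'a \<Rightarrow> nat \<Rightarrow> real"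
  assumes finS: "finite S" and finF: "finite F" and n: "0 < n"
    and few: "real (card S) * exp (- real (card F) / n) < 1"
    and Y01: "\<And>A f i. A \<in> S \<Longrightarrow> f \<in> F \<Longrightarrow> 0 \<le> Y A f i \<and> Y A f i \<le> 1"
    and Ysum: "\<And>A f. A \<in> S \<Longrightarrow> f \<in> F \<Longrightarrow> (\<Sum>i\<in>{1..n}. Y A f i) \<le> 3"
  shows "\<exists>l\<in>PiE F (\<lambda>_. {1..n}). \<forall>A\<in>S. (\<Sum>f\<in>F. Y A f (l f)) \<le> 7 * real (card F) / n"
proof -
  define P where "P = PiE F (\<lambda>_. {1..n::nat})"
  define Bad where "Bad A = {l\<in>P. 7 * real (card F) / n < (\<Sum>f\<in>F. Y A f (l f))}" for A
  have finP: "finite P" unfolding P_def using finF by (simp add: finite_PiE)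
  have cardP: "card P = n ^ card F" unfolding P_def using finF by (simp add: card_PiE)
  have "real (card (\<Union>A\<in>S. Bad A)) \<le> (\<Sum>A\<in>S. real (card (Bad A)))"
    using card_UN_le[OF finS, of Bad] by (simp flip: of_nat_sum)
  also have "\<dots> \<le> (\<Sum>A\<in>S. real n ^ card F * exp (- real (card F) / n))"
    unfolding Bad_def P_def
    by (intro sum_mono card_PiE_sum_large_le[OF finF]) (use n Y01 Ysum in auto)
  also have "\<dots> = real n ^ card F * (real (card S) * exp (- real (card F) / n))" by simp
  also have "\<dots> < real (card P)" using few n cardP by simp
  finally have "card (\<Union>A\<in>S. Bad A) < card P" by simp
  moreover have "(\<Union>A\<in>S. Bad A) \<subseteq> P" unfolding Bad_def by auto
  ultimately have "(\<Union>A\<in>S. Bad A) \<subset> P" by auto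
  then obtain l where "l \<in> P" "\<forall>A\<in>S. l \<notin> Bad A" by blast
  then show ?thesis unfolding Bad_def P_def by (auto simp: not_less)
qed

definition uniform_entry :: "nat \<Rightarrow> (nat \<Rightarrow> nat) \<Rightarrow> real \<Rightarrow> entry" where
  "uniform_entry b g p = ((\<lambda>j. if j \<in> word_support b g then 1 / real b else 0), p)"

definition code_menu :: "nat \<Rightarrow> (nat \<Rightarrow> nat) set \<Rightarrow> ((nat \<Rightarrow> nat) \<Rightarrow> nat) \<Rightarrow> menu" where
  "code_menu b F l = insert null_entry ((\<lambda>f. uniform_entry b f (2 ^ l f / 4)) ` F)"

lemma sum_uniform_entry:
  assumes "finite T"
  shows "(\<Sum>j\<in>T. fst (uniform_entry b g p) j) = real (card (T \<inter> word_support b g)) / real b"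
  using sum.inter_restrict[OF assms, of "\<lambda>_. 1 / real b" "word_support b g"]
  by (simp add: uniform_entry_def)

lemma sum_uniform_entry_total:
  assumes "16 * b \<le> m" "1 \<le> b" "g \<in> code_words b"
  shows "(\<Sum>j<m. fst (uniform_entry b g p) j) = 1"
proof -
  have "{..<m} \<inter> word_support b g = word_support b g" using word_support_subset[OF assms(1,3)] by auto
  then show ?thesis using assms by (simp add: sum_uniform_entry card_word_support)
qed

lemma utility_uniform_entry:
  assumes mb: "16 * b \<le> m" and b: "1 \<le> b" and f: "f \<in> code_words b" and g: "g \<in> code_words b"
  shows "utility m (raised_val m (word_support b f) w) (uniform_entry b g p)
           = (w - 1) * real (agreement b f g) / real b + 1 - p"
  unfolding utility_raised_val[OF word_support_subset[OF mb f]] sum_uniform_entry_total[OF mb b g]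
  by (simp add: sum_uniform_entry finite_word_support card_word_support_inter[OF f g])
    (simp add: uniform_entry_def)

lemma valid_uniform_entry:
  assumes mb: "16 * b \<le> m" and b: "1 \<le> b" and g: "g \<in> code_words b" and p: "0 \<le> p"
  shows "valid_entry m (uniform_entry b g p)"
  using sum_uniform_entry_total[OF assms(1-3)] word_support_subset[OF mb g] p
  unfolding valid_entry_def by (auto simp: uniform_entry_def)

lemma code_menu_is_auction:
  assumes "16 * b \<le> m" "1 \<le> b" "F \<subseteq> code_words b" "finite F"
  shows "is_auction m (code_menu b F l)"
proof (rule finite_menu_is_auction)
  fix e assume "e \<in> code_menu b F l"
  then show "valid_entry m e"
    using valid_uniform_entry[OF assms(1,2)] assms(3)
    unfolding code_menu_def by (auto simp: valid_entry_def null_entry_def)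
qed (use assms(4) in \<open>auto simp: code_menu_def\<close>)

lemma utility_uniform_entry_other_lt:
  assumes mb: "16 * b \<le> m" and b: "1 \<le> b" and f: "f \<in> code_words b" and g: "g \<in> code_words b"
    and far: "2 * agreement b f g \<le> b" and w: "2 \<le> w" and p: "0 < p"
  shows "utility m (raised_val m (word_support b f) w) (uniform_entry b g p) < 3 / 4 * w"
proof -
  define a where "a = real (agreement b f g) / real b"
  have "real (2 * agreement b f g) \<le> real b" using far by (rule of_nat_mono)
  then have "a \<le> 1 / 2" using b unfolding a_def by (simp add: field_simps)
  then have "(w - 1) * a \<le> (w - 1) * (1 / 2)" using w by (intro mult_left_mono) auto
  moreover have "utility m (raised_val m (word_support b f) w) (uniform_entry b g p)
      = (w - 1) * a + 1 - p"
    unfolding a_def utility_uniform_entry[OF mb b f g] by simp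
  ultimately have "utility m (raised_val m (word_support b f) w) (uniform_entry b g p)
      < (w - 1) * (1 / 2) + 1"
    using p by linarith
  also have "\<dots> \<le> 3 / 4 * w" using w by (simp add: field_simps)
  finally show ?thesis .
qed

text \<open>At level \<open>l f \<ge> 1\<close> the own entry leaves utility \<open>3/4 \<cdot> 2\<^bsup>l f\<^esup>\<close>, more than
  any other entry.\<close>
lemma payment_code_menu:
  assumes mb: "16 * b \<le> m" and b: "1 \<le> b" and FU: "F \<subseteq> code_words b" and finF: "finite F"
    and code: "\<forall>f\<in>F. \<forall>g\<in>F. f \<noteq> g \<longrightarrow> 2 * agreement b f g \<le> b"
    and f: "f \<in> F" and lf: "1 \<le> l f"
  shows "payment m (code_menu b F l) (raised_val m (word_support b f) (2 ^ l f)) = 2 ^ l f / 4"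
proof -
  define w :: real where "w = 2 ^ l f"
  define e where "e = uniform_entry b f (w / 4)"
  define v where "v = raised_val m (word_support b f) w"
  have "(2::real) ^ 1 \<le> 2 ^ l f" using lf by (rule power_increasing) simp
  then have w2: "2 \<le> w" unfolding w_def by simp
  have fU: "f \<in> code_words b" using f FU by auto
  have ue: "utility m v e = 3 / 4 * w"
    unfolding v_def e_def utility_uniform_entry[OF mb b fU fU] agreement_self
    using b by (simp add: field_simps)
  have better: "utility m v e' < utility m v e" if e': "e' \<in> code_menu b F l" "e' \<noteq> e" for e'
  proof -
    consider "e' = null_entry" | g where "g \<in> F" "g \<noteq> f" "e' = uniform_entry b g (2 ^ l g / 4)"
      using e' unfolding code_menu_def e_def w_def by auto
    then show ?thesis
    proof cases
      case 1
      then show ?thesis using ue w2 by simp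
    next
      case (2 g)
      have gU: "g \<in> code_words b" using 2(1) FU by auto
      have far: "2 * agreement b f g \<le> b" using code f 2(1,2) by auto
      have "utility m v e' < 3 / 4 * w"
        unfolding v_def 2(3) by (rule utility_uniform_entry_other_lt[OF mb b fU gU far w2]) simp
      then show ?thesis using ue by simp
    qed
  qed
  have "is_choice m (code_menu b F l) v e"
    unfolding is_choice_def
  proof (intro conjI ballI impI)
    show "e \<in> code_menu b F l" unfolding code_menu_def e_def w_def using f by simp
  next
    fix e' assume "e' \<in> code_menu b F l"
    then show "utility m v e' \<le> utility m v e" using better by fastforce
    assume "utility m v e' = utility m v e"
    with \<open>e' \<in> code_menu b F l\<close> show "snd e' \<le> snd e" using better by fastforce
  qed
  then show ?thesis unfolding v_def w_def by (simp add: payment_eq_choice e_def uniform_entry_def w_def)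
qed

lemma L_complexity_le_enat:
  assumes "L_complexity L A \<le> enat N"
  obtains s where "L s = A" "length s \<le> N"
proof -
  have "\<not> (\<forall>s\<in>{s. L s = A}. enat (Suc N) \<le> enat (length s))"
  proof
    assume "\<forall>s\<in>{s. L s = A}. enat (Suc N) \<le> enat (length s)"
    then have "enat (Suc N) \<le> L_complexity L A" unfolding L_complexity_def by (simp add: le_INF_iff)
    then have "enat (Suc N) \<le> enat N" using assms by (rule order_trans)
    then show False by simp
  qed
  then show thesis using that by auto
qed

lemma
  fixes L :: "bool list \<Rightarrow> 'a"
  shows finite_low_complexity: "finite {A. L_complexity L A \<le> enat N}"
    and card_low_complexity_le: "card {A. L_complexity L A \<le> enat N} \<le> 2 ^ Suc N"
proof -
  define X where "X = {s :: bool list. set s \<subseteq> UNIV \<and> length s \<le> N}"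
  have finX: "finite X" unfolding X_def by (rule finite_lists_length_le) simp
  have sub: "{A. L_complexity L A \<le> enat N} \<subseteq> L ` X"
    unfolding X_def by (auto elim: L_complexity_le_enat)
  then show "finite {A. L_complexity L A \<le> enat N}" using finX finite_surj by blast
  have "card {A. L_complexity L A \<le> enat N} \<le> card X"
    using card_mono[OF _ sub] card_image_le[OF finX] finX by (meson finite_imageI order_trans)
  also have "\<dots> = (\<Sum>i\<le>N. 2 ^ i)" unfolding X_def by (subst card_lists_length_le) auto
  also have "\<dots> < 2 ^ Suc N" by (induction N) auto
  finally show "card {A. L_complexity L A \<le> enat N} \<le> 2 ^ Suc N" by simp
qed

section \<open>The hard distribution\<close>

text \<open>The valuation raised to \<open>2\<^bsup>l f\<^esup>\<close> on \<open>T f\<close> has probability proportional to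
  \<open>2\<^bsup>-l f\<^esup>\<close>; it is realised as the uniform distribution on \<open>2\<^bsup>n - l f\<^esup>\<close> copies.\<close>
definition level_dist :: "nat \<Rightarrow> ('a \<Rightarrow> nat set) \<Rightarrow> 'a set \<Rightarrow> ('a \<Rightarrow> nat) \<Rightarrow> nat
    \<Rightarrow> valuation pmf" where
  "level_dist m T F l n = map_pmf (\<lambda>(f, _). raised_val m (T f) (2 ^ l f))
     (pmf_of_set (SIGMA f:F. {..<2 ^ (n - l f) :: nat}))"

lemma fst_image_level_copies: "fst ` (SIGMA f:F. {..<2 ^ (n - l f) :: nat}) = F"
  by (simp add: fst_image_Sigma lessThan_empty_iff)

lemma set_level_dist:
  assumes "finite F" "F \<noteq> {}"
  shows "set_pmf (level_dist m T F l n) = (\<lambda>f. raised_val m (T f) (2 ^ l f)) ` F"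
proof -
  have "(SIGMA f:F. {..<2 ^ (n - l f) :: nat}) \<noteq> {}"
    using assms(2) fst_image_level_copies[of F n l] by auto
  then have "set_pmf (level_dist m T F l n)
      = (\<lambda>f. raised_val m (T f) (2 ^ l f)) ` fst ` (SIGMA f:F. {..<2 ^ (n - l f) :: nat})"
    unfolding level_dist_def using assms(1) by (simp add: image_image case_prod_beta)
  then show ?thesis by (simp only: fst_image_level_copies)
qed

lemma level_dist_in_vals_box:
  assumes "finite F" "F \<noteq> {}" and levels: "\<forall>f\<in>F. l f \<le> n" and H: "2 ^ n \<le> H"
  shows "set_pmf (level_dist m T F l n) \<subseteq> vals_box m H"
proof -
  have "(2::real) ^ l f \<le> H" if "f \<in> F" for f
  proof -
    have "(2::real) ^ l f \<le> 2 ^ n" using levels that by (intro power_increasing) auto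
    then show ?thesis using H by linarith
  qed
  then show ?thesis
    unfolding set_level_dist[OF assms(1,2)] by (auto intro!: raised_val_in_vals_box)
qed

lemma revenue_level_dist:
  assumes finF: "finite F" and ne: "F \<noteq> {}" and levels: "\<forall>f\<in>F. l f \<le> n"
  obtains C :: real where "0 < C"
    "\<And>A. revenue m A (level_dist m T F l n)
            = C * (\<Sum>f\<in>F. payment m A (raised_val m (T f) (2 ^ l f)) / 2 ^ l f)"
proof
  define PS where "PS = (SIGMA f:F. {..<2 ^ (n - l f) :: nat})"
  have finPS: "finite PS" and nePS: "PS \<noteq> {}"
    unfolding PS_def using finF ne fst_image_level_copies[of F n l] by auto
  show "0 < 2 ^ n / real (card PS)" using finPS nePS by (simp add: card_gt_0_iff)
  fix A
  define p where "p f = payment m A (raised_val m (T f) (2 ^ l f))" for f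
  have "revenue m A (level_dist m T F l n) = (\<Sum>(f, _)\<in>PS. p f) / real (card PS)"
    unfolding revenue_def level_dist_def PS_def[symmetric] p_def
    by (simp add: integral_pmf_of_set[OF nePS finPS] case_prod_beta)
  also have "(\<Sum>(f, _)\<in>PS. p f) = (\<Sum>f\<in>F. 2 ^ (n - l f) * p f)"
    unfolding PS_def using finF by (simp add: sum.Sigma[symmetric])
  also have "\<dots> = (\<Sum>f\<in>F. 2 ^ n * (p f / 2 ^ l f))"
    using levels by (intro sum.cong) (auto simp: field_simps power_diff)
  also have "\<dots> = 2 ^ n * (\<Sum>f\<in>F. p f / 2 ^ l f)" by (rule sum_distrib_left[symmetric])
  finally show "revenue m A (level_dist m T F l n) = 2 ^ n / real (card PS) * (\<Sum>f\<in>F. p f / 2 ^ l f)"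
    by simp
qed

lemma card_mul_exp_neg_lt_1:
  assumes k: "k \<le> 2 ^ Suc N" and x: "real N + 1 < x"
  shows "real k * exp (- x) < 1"
proof -
  have "exp (- x) < exp (real (Suc N) * (-1))" using x by simp
  also have "\<dots> = exp (-1) ^ Suc N" by (rule exp_of_nat_mult)
  also have "\<dots> \<le> (1 / 2) ^ Suc N"
  proof (rule power_mono)
    have "2 \<le> exp (1::real)" using exp_ge_add_one_self[of 1] by simp
    then show "exp (-1) \<le> (1::real) / 2" by (simp add: exp_minus field_simps)
  qed simp
  finally have "real k * exp (- x) < real k * (1 / 2) ^ Suc N" if "0 < k"
    using that by simp
  also have "\<dots> \<le> 2 ^ Suc N * (1 / 2) ^ Suc N"
  proof (rule mult_right_mono)
    show "real k \<le> 2 ^ Suc N" using of_nat_mono[OF k] by (simp only: of_nat_power of_nat_numeral)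
  qed simp
  also have "\<dots> = 1" by (simp flip: power_mult_distrib)
  finally show ?thesis by (cases "k = 0") simp_all
qed

lemma exists_levels_low_complexity:
  fixes L :: "bool list \<Rightarrow> menu" and T :: "'a \<Rightarrow> nat set"
  assumes finF: "finite F" and T: "\<And>f. f \<in> F \<Longrightarrow> T f \<subseteq> {..<m}" and n: "1 \<le> n"
    and small: "real n * (real N + 1) < real (card F)"
  obtains l where "l \<in> PiE F (\<lambda>_. {1..n})"
    "\<And>A. is_auction m A \<Longrightarrow> L_complexity L A \<le> enat N \<Longrightarrow>
       (\<Sum>f\<in>F. payment m A (raised_val m (T f) (2 ^ l f)) / 2 ^ l f) \<le> 7 * real (card F) / n"
proof -
  define S where "S = {A. is_auction m A \<and> L_complexity L A \<le> enat N}"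
  define Y where "Y A f i = payment m A (raised_val m (T f) (2 ^ i)) / 2 ^ i" for A f i
  have S_sub: "S \<subseteq> {A. L_complexity L A \<le> enat N}" unfolding S_def by blast
  have finS: "finite S" using S_sub finite_low_complexity by (rule finite_subset)
  have "card S \<le> 2 ^ Suc N"
    using card_mono[OF finite_low_complexity S_sub] card_low_complexity_le by (rule order_trans)
  moreover have "real N + 1 < real (card F) / n" using small n by (simp add: field_simps)
  ultimately have few: "real (card S) * exp (- (real (card F) / n)) < 1"
    by (rule card_mul_exp_neg_lt_1)
  have "\<exists>l\<in>PiE F (\<lambda>_. {1..n}). \<forall>A\<in>S. (\<Sum>f\<in>F. Y A f (l f)) \<le> 7 * real (card F) / n"
  proof (rule exists_levels_sum_le[OF finS finF])
    show "0 < n" using n by simp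
    show "real (card S) * exp (- real (card F) / n) < 1" using few by (simp only: minus_divide_left)
    fix A f i assume A: "A \<in> S" and f: "f \<in> F"
    then have "is_auction m A" unfolding S_def by simp
    moreover have "raised_val m (T f) (2 ^ i) \<in> vals_box m (2 ^ i)"
      by (rule raised_val_in_vals_box) auto
    ultimately show "0 \<le> Y A f i \<and> Y A f i \<le> 1"
      unfolding Y_def using payment_nonneg payment_le by simp
    show "(\<Sum>i\<in>{1..n}. Y A f i) \<le> 3"
      unfolding Y_def using sum_payment_raised_val_le[OF \<open>is_auction m A\<close> T[OF f]] .
  qed
  then show thesis using that unfolding S_def Y_def by blast
qed

lemma revenue_gap_low_complexity:
  fixes L :: "bool list \<Rightarrow> menu"
  assumes mb: "16 * b \<le> m" and b: "1 \<le> b" and n: "1 \<le> n" and H: "2 ^ n \<le> H"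
    and small: "real n * (real N + 1) < 2 ^ b" and c: "28 / n \<le> c"
  shows "\<exists>D. set_pmf D \<subseteq> vals_box m H
           \<and> (\<forall>A. is_auction m A \<longrightarrow> L_complexity L A \<le> enat N \<longrightarrow> revenue m A D \<le> c * OPT m D)"
proof -
  obtain F where FU: "F \<subseteq> code_words b" and KF: "2 ^ b \<le> card F"
    and code: "\<forall>f\<in>F. \<forall>g\<in>F. f \<noteq> g \<longrightarrow> 2 * agreement b f g \<le> b"
    using exists_large_code[OF b] by auto
  have finF: "finite F" using FU finite_code_words by (rule finite_subset)
  have neF: "F \<noteq> {}" using KF by auto
  have "(2::real) ^ b \<le> real (card F)"
    using of_nat_mono[OF KF] by (simp only: of_nat_power of_nat_numeral)
  then have "real n * (real N + 1) < real (card F)" using small by linarith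
  then obtain l where l: "l \<in> PiE F (\<lambda>_. {1..n})"
    and good: "\<And>A. is_auction m A \<Longrightarrow> L_complexity L A \<le> enat N \<Longrightarrow>
       (\<Sum>f\<in>F. payment m A (raised_val m (word_support b f) (2 ^ l f)) / 2 ^ l f)
         \<le> 7 * real (card F) / n"
    using exists_levels_low_complexity[OF finF _ n] word_support_subset[OF mb] FU by blast
  have levels: "\<forall>f\<in>F. 1 \<le> l f \<and> l f \<le> n" using l by (auto simp: PiE_iff)
  define D where "D = level_dist m (word_support b) F l n"
  have boxD: "set_pmf D \<subseteq> vals_box m H"
    unfolding D_def using level_dist_in_vals_box finF neF levels H by blast
  have finD: "finite (set_pmf D)" unfolding D_def set_level_dist[OF finF neF] using finF by simp
  obtain C where C: "0 < C" and rev: "\<And>A. revenue m A D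
      = C * (\<Sum>f\<in>F. payment m A (raised_val m (word_support b f) (2 ^ l f)) / 2 ^ l f)"
    using revenue_level_dist[OF finF neF] levels unfolding D_def by blast
  define M where "M = code_menu b F l"
  have M: "is_auction m M" unfolding M_def using code_menu_is_auction mb b FU finF by blast
  have "payment m M (raised_val m (word_support b f) (2 ^ l f)) / 2 ^ l f = 1 / 4" if "f \<in> F" for f
    unfolding M_def using payment_code_menu[OF mb b FU finF code that] levels that by simp
  then have "(\<Sum>f\<in>F. payment m M (raised_val m (word_support b f) (2 ^ l f)) / 2 ^ l f)
      = (\<Sum>f\<in>F. 1 / 4)"
    by (rule sum.cong[OF refl])
  then have revM: "revenue m M D = C * (real (card F) / 4)" unfolding rev by simp
  have "0 \<le> H" using H by (rule order_trans[rotated]) simp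
  then have OPT_M: "revenue m M D \<le> OPT m D" and OPT0: "0 \<le> OPT m D"
    using revenue_le_OPT[OF M finD boxD] OPT_nonneg[OF M finD boxD] by auto
  have "revenue m A D \<le> c * OPT m D" if "is_auction m A" "L_complexity L A \<le> enat N" for A
  proof -
    have "revenue m A D \<le> C * (7 * real (card F) / n)"
      unfolding rev using good[OF that] C by (intro mult_left_mono) auto
    also have "\<dots> = 28 / n * revenue m M D" unfolding revM by simp
    also have "\<dots> \<le> 28 / n * OPT m D" using OPT_M by (intro mult_left_mono) auto
    also have "\<dots> \<le> c * OPT m D" using c OPT0 by (rule mult_right_mono)
    finally show ?thesis .
  qed
  then show ?thesis using boxD by blast
qed

lemma floor_log2_bounds:
  fixes H :: real
  assumes H: "2 \<le> H"
  defines "n \<equiv> nat \<lfloor>log 2 H\<rfloor>"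
  shows "1 \<le> n" "2 ^ n \<le> H" "ln H \<le> 2 * real n"
proof -
  have logH: "1 \<le> log 2 H" using H by (simp add: le_log_iff)
  then have n_le: "real n \<le> log 2 H" and n_gt: "log 2 H < real n + 1"
    unfolding n_def by linarith+
  show n1: "1 \<le> n" unfolding n_def using logH by linarith
  have "(2::real) ^ n = 2 powr real n" by (simp add: powr_realpow)
  also have "\<dots> \<le> 2 powr (log 2 H)" using n_le by simp
  also have "\<dots> = H" using H by simp
  finally show "2 ^ n \<le> H" .
  have "ln H = log 2 H * ln 2" by (simp add: log_def)
  also have "\<dots> \<le> (real n + 1) * 1" using n_gt ln_2_less_1 by (intro mult_mono) auto
  finally show "ln H \<le> 2 * real n" using n1 by simp
qed

text \<open>The constant \<open>400\<close> leaves room for \<open>n (N + 1) \<le> 2\<^bsup>2m/400 + 1\<^esup> < 2\<^bsup>m/16 - 1\<^esup>\<close>.\<close>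
lemma few_levels_times_complexity:
  fixes H :: real
  assumes H: "2 \<le> H" "H < 2 powr (real m / 400)"
  defines "n \<equiv> nat \<lfloor>log 2 H\<rfloor>" and "N \<equiv> nat \<lfloor>2 powr (real m / 400)\<rfloor>"
  shows "1 \<le> m div 16" "real n * (real N + 1) < 2 ^ (m div 16)"
proof -
  define x where "x = real m / 400"
  have "2 powr 1 < 2 powr x" using H unfolding x_def by simp
  then have x1: "1 < x" using powr_less_cancel_iff[of 2 1 x] by simp
  have "m = 16 * (m div 16) + m mod 16" by simp
  then have "real m = real (16 * (m div 16) + m mod 16)" by (rule arg_cong)
  then have "real m = 16 * real (m div 16) + real (m mod 16)"
    by (simp only: of_nat_add of_nat_mult of_nat_numeral)
  moreover have "real (m mod 16) < 16" by simp
  ultimately have b_ge: "real m / 16 - 1 \<le> real (m div 16)" by linarith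
  then show "1 \<le> m div 16" using x1 unfolding x_def by simp
  have "real n < 2 ^ n" using less_exp[of n] by (simp flip: of_nat_less_iff)
  also have "\<dots> < 2 powr x" using floor_log2_bounds(2)[OF H(1)] H(2) unfolding n_def x_def by simp
  finally have n_lt: "real n < 2 powr x" .
  have N_le: "real N \<le> 2 powr x" unfolding N_def x_def by simp
  have p1: "1 \<le> 2 powr x" using x1 powr_le_cancel_iff[of 2 0 x] by simp
  have "real n * (real N + 1) < 2 powr x * (real N + 1)"
    using n_lt by (intro mult_strict_right_mono) auto
  also have "\<dots> \<le> 2 powr x * (2 * 2 powr x)"
    using N_le p1 by (intro mult_left_mono) auto
  also have "\<dots> = 2 powr (x + x + 1)" by (simp only: powr_add powr_one mult_ac)
  also have "\<dots> \<le> 2 powr real (m div 16)" using b_ge x1 unfolding x_def by simp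
  also have "\<dots> = 2 ^ (m div 16)" by (rule powr_realpow) simp
  finally show "real n * (real N + 1) < 2 ^ (m div 16)" .
qed

lemma exists_dist_revenue_le_OPT:
  assumes H: "1 \<le> H" and c: "1 \<le> c"
  shows "\<exists>D. set_pmf D \<subseteq> vals_box m H \<and> (\<forall>A. is_auction m A \<longrightarrow> revenue m A D \<le> c * OPT m D)"
proof (intro exI conjI allI impI)
  define D where "D = return_pmf (raised_val m {} 1)"
  show box: "set_pmf D \<subseteq> vals_box m H" unfolding D_def using H by (simp add: raised_val_in_vals_box)
  fix A assume A: "is_auction m A"
  have fin: "finite (set_pmf D)" unfolding D_def by simp
  have "revenue m A D \<le> OPT m D" using revenue_le_OPT[OF A fin box] H by simp
  also have "\<dots> \<le> c * OPT m D" using OPT_nonneg[OF A fin box] H c by (simp add: mult_le_cancel_right1)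
  finally show "revenue m A D \<le> c * OPT m D" .
qed

theorem theorem2:
  "\<exists>c::real. c > 0 \<and>
    (\<forall>(L :: bool list \<Rightarrow> menu) (m::nat) (H::real).
       m \<ge> 1 \<longrightarrow> 1 < H \<longrightarrow> H < 2 powr (real m / 400) \<longrightarrow>
       (\<exists>D :: valuation pmf. set_pmf D \<subseteq> vals_box m H \<and>
          (\<forall>A. is_auction m A \<longrightarrow>
               L_complexity L A \<le> enat (nat \<lfloor>2 powr (real m / 400)\<rfloor>) \<longrightarrow>
               revenue m A D \<le> c / ln H * OPT m D)))"
proof (intro exI[of _ 56] conjI allI impI)
  fix L :: "bool list \<Rightarrow> menu" and m :: nat and H :: real
  assume H: "1 < H" "H < 2 powr (real m / 400)"
  let ?N = "nat \<lfloor>2 powr (real m / 400)\<rfloor>"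
  show "\<exists>D. set_pmf D \<subseteq> vals_box m H \<and> (\<forall>A. is_auction m A \<longrightarrow>
          L_complexity L A \<le> enat ?N \<longrightarrow> revenue m A D \<le> 56 / ln H * OPT m D)"
  proof (cases "H < 2")
    case True
    then have "ln H < 1" using ln_2_less_1 H(1) by (smt (verit) ln_less_cancel_iff)
    then have "1 \<le> 56 / ln H" using H(1) by (simp add: field_simps)
    then show ?thesis using exists_dist_revenue_le_OPT[of H] H(1) by (meson less_imp_le)
  next
    case False
    then have H2: "2 \<le> H" by simp
    define n where "n = nat \<lfloor>log 2 H\<rfloor>"
    have n: "1 \<le> n" "2 ^ n \<le> H" "ln H \<le> 2 * real n"
      using floor_log2_bounds[OF H2] unfolding n_def by auto
    have "28 / n \<le> 56 / ln H" using n(1,3) H(1) by (simp add: field_simps)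
    moreover have "16 * (m div 16) \<le> m" by simp
    ultimately show ?thesis
      using revenue_gap_low_complexity[OF _ _ n(1,2)] few_levels_times_complexity[OF H2 H(2)]
      unfolding n_def by blast
  qed
qed simp

end
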